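(* For all integers $n\ge 4$ and $2\le k\le n/2$, there exists a feasible irredundant (circular) homogeneous PV graph $\vec G_R$ with $n$ sites and $k$ carriers such that $$\mathcal M(\vec G_R)\ \ge\ n(k-1).$$ (This holds even though the agent knows $\vec G_R$, $n$ and $k$ and has unlimited memory.)
   Context: A PV (periodically varying) system consists of a finite set $S$ of $n$ sites and a set $C$ of $k\le n$ carriers. Each carrier $c$ has a route $\pi(c)=\langle x_0,\dots,x_{p(c)-1}\rangle$, a finite sequence of sites of length $p(c)\ge1$ called its period; $\pi(c)[j]=x_{j\bmod p(c)}$. At each time $t\in\mathbb N$ carrier $c$ is at $\pi(c)[t]$ and moves to $\pi(c)[t+1]$. The PV graph $\vec G_R$ is the directed edge-labelled multigraph on $S$ with edges $(x_i,x_{i+1},i)$, $0\le i<p(c)$, for every carrier. The system is homogeneous if all $p(c)$ are equal, heterogeneous otherwise. A route is simple if $\pi(c)[i]\ne\pi(c)[i+1]$ for all $i$ and, whenever $\pi(c)[i]=\pi(c)[j]$ with $0\le i<j<p(c)$, then $\pi(c)[i+1]\ne\pi(c)[j+1]$. A route is irredundant (circular) if it is simple and the directed multigraph it describes is either a simple cycle (the sites $x_0,\dots,x_{p(c)-1}$ are distinct) or a virtual cycle, i.e. the closed walk of a simple traversal of a tree (each tree edge traversed once in each direction); in particular $p(c)\le 2(n-1)$. A PV graph is irredundant if all its routes are irredundant. An exploring agent is injected at time $0$ at a site of $\mathrm{start}(\vec G_R)=\{\pi(c)[0]:c\in C\}$; if at time $t$ it is at site $x$ it must either ride one step with some carrier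 $c$ with $\pi(c)[t]=x$ (one move) or halt; it cannot wait. A strategy solves PVG-Exploration of $\vec G_R$ if from every injection site the agent visits all sites and halts in finite time. $\vec G_R$ is feasible if from the starting point of every carrier some realizable walk visits all sites. For feasible $\vec G_R$, $\mathcal M(\vec G_R)$ denotes the minimum, over all deterministic strategies solving PVG-Exploration of $\vec G_R$ (which may use full knowledge of $\vec G_R$ and unlimited memory), of the maximum over injection sites of the number of moves performed. *)

theory Defs
  imports Main
begin

(* A PV system with n sites and k carriers: sites are {..<n}, carriers are {..<k},
   R c is the route (period) of carrier c, a nonempty list of sites. *)

definition pv_system :: "nat \<Rightarrow> nat \<Rightarrow> (nat \<Rightarrow> nat list) \<Rightarrow> bool" where
  "pv_system n k R \<longleftrightarrow> 1 \<le> k \<and> k \<le> n \<and>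
     (\<forall>c<k. R c \<noteq> [] \<and> set (R c) \<subseteq> {..<n})"

definition rt :: "nat list \<Rightarrow> nat \<Rightarrow> nat" where
  "rt r j = r ! (j mod length r)"

definition pos :: "(nat \<Rightarrow> nat list) \<Rightarrow> nat \<Rightarrow> nat \<Rightarrow> nat" where
  "pos R c t = rt (R c) t"

definition homogeneous :: "nat \<Rightarrow> (nat \<Rightarrow> nat list) \<Rightarrow> bool" where
  "homogeneous k R \<longleftrightarrow> (\<forall>c<k. \<forall>d<k. length (R c) = length (R d))"

definition simple_route :: "nat list \<Rightarrow> bool" where
  "simple_route r \<longleftrightarrow> r \<noteq> [] \<and>
     (\<forall>i. rt r i \<noteq> rt r (Suc i)) \<and>
     (\<forall>i j. i < j \<and> j < length r \<and> rt r i = rt r j \<longrightarrow> rt r (Suc i) \<noteq> rt r (Suc j))"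

definition route_edges :: "nat list \<Rightarrow> nat set set" where
  "route_edges r = {{rt r i, rt r (Suc i)} | i. i < length r}"

definition is_tree :: "'a set \<Rightarrow> 'a set set \<Rightarrow> bool" where
  "is_tree V E \<longleftrightarrow> finite V \<and> V \<noteq> {} \<and>
     (\<forall>e\<in>E. \<exists>u v. e = {u, v} \<and> u \<noteq> v \<and> u \<in> V \<and> v \<in> V) \<and>
     (\<forall>u\<in>V. \<forall>v\<in>V. (u, v) \<in> {(x, y). {x, y} \<in> E}\<^sup>*) \<and>
     card E = card V - 1"

definition simple_cycle_route :: "nat list \<Rightarrow> bool" where
  "simple_cycle_route r \<longleftrightarrow> distinct r"

definition virtual_cycle_route :: "nat list \<Rightarrow> bool" where
  "virtual_cycle_route r \<longleftrightarrow> is_tree (set r) (route_edges r) \<and>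
     (\<forall>u v. {u, v} \<in> route_edges r \<and> u \<noteq> v \<longrightarrow>
        (\<exists>!i. i < length r \<and> rt r i = u \<and> rt r (Suc i) = v))"

definition irredundant_route :: "nat list \<Rightarrow> bool" where
  "irredundant_route r \<longleftrightarrow> simple_route r \<and> (simple_cycle_route r \<or> virtual_cycle_route r)"

definition irredundant_pv :: "nat \<Rightarrow> (nat \<Rightarrow> nat list) \<Rightarrow> bool" where
  "irredundant_pv k R \<longleftrightarrow> (\<forall>c<k. irredundant_route (R c))"

definition start_sites :: "nat \<Rightarrow> (nat \<Rightarrow> nat list) \<Rightarrow> nat set" where
  "start_sites k R = {pos R c 0 | c. c < k}"

(* A walk of the agent injected at site s at time 0 is the list cs of carriers it rides:
   at time t it rides carrier cs!t (from pos R (cs!t) t to pos R (cs!t) (t+1)); it halts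
   after the last move. No waiting is allowed, so consecutive rides must connect. *)
definition realizable_walk :: "nat \<Rightarrow> (nat \<Rightarrow> nat list) \<Rightarrow> nat \<Rightarrow> nat list \<Rightarrow> bool" where
  "realizable_walk k R s cs \<longleftrightarrow>
     (\<forall>t<length cs. cs ! t < k) \<and>
     (cs \<noteq> [] \<longrightarrow> pos R (cs ! 0) 0 = s) \<and>
     (\<forall>t. Suc t < length cs \<longrightarrow> pos R (cs ! t) (Suc t) = pos R (cs ! Suc t) (Suc t))"

definition visited :: "(nat \<Rightarrow> nat list) \<Rightarrow> nat \<Rightarrow> nat list \<Rightarrow> nat set" where
  "visited R s cs = insert s {pos R (cs ! t) (Suc t) | t. t < length cs}"

definition explores :: "nat \<Rightarrow> nat \<Rightarrow> (nat \<Rightarrow> nat list) \<Rightarrow> nat \<Rightarrow> nat list \<Rightarrow> bool" where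
  "explores n k R s cs \<longleftrightarrow> realizable_walk k R s cs \<and> {..<n} \<subseteq> visited R s cs"

definition feasible :: "nat \<Rightarrow> nat \<Rightarrow> (nat \<Rightarrow> nat list) \<Rightarrow> bool" where
  "feasible n k R \<longleftrightarrow> (\<forall>c<k. \<exists>cs. explores n k R (pos R c 0) cs)"

(* A deterministic strategy (full knowledge of the PV graph, unlimited memory) determines,
   for each injection site s, the finite walk performed; it solves PVG-Exploration iff every
   such walk explores all sites. *)
definition solves :: "nat \<Rightarrow> nat \<Rightarrow> (nat \<Rightarrow> nat list) \<Rightarrow> (nat \<Rightarrow> nat list) \<Rightarrow> bool" where
  "solves n k R W \<longleftrightarrow> (\<forall>s\<in>start_sites k R. explores n k R s (W s))"

definition M_moves :: "nat \<Rightarrow> nat \<Rightarrow> (nat \<Rightarrow> nat list) \<Rightarrow> nat" where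
  "M_moves n k R = (LEAST m. \<exists>W. solves n k R W \<and> (\<forall>s\<in>start_sites k R. length (W s) \<le> m))"

end

theory Submission
  imports Defs
begin

(* All routes are star routes (virtual cycles of stars) of the same period 2m, m = n - 2:
   a carrier alternates between its hub, visited at even times, and its m leaves, visited
   one per odd time.  The hubs are 0, ..., k - 2 and n - 1.  The leaf schedules are chosen so
   that two carriers are ever at the same site only if they are consecutive, c and c + 1,
   and then only once per period, at a leaf slot that moves two slots earlier with every c.
   An agent injected at site 0 must eventually visit n - 1, which only carrier k - 1 reaches;
   so it has to change carriers 0 -> 1 -> ... -> k - 1 through these meetings, and the drift
   of the meeting slots costs nearly a full period per change, at least n (k - 1) moves in
   total.  On the other hand the greedy rider along the same chain explores everything. *)

lemma mod_eq_imp_le: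
  fixes x y m :: nat
  assumes "x mod m = y mod m" and "y < x + m"
  shows "y \<le> x"
proof (rule ccontr)
  assume "\<not> y \<le> x"
  then have "m dvd (y - x)" "0 < y - x" "y - x < m"
    using assms mod_eq_dvd_iff_nat[of x y m] by auto
  then show False using dvd_imp_le by fastforce
qed

lemma mod_eq_in_window:
  fixes x y c m :: nat
  assumes "x mod m = y mod m"
    and "c \<le> x" "x < c + m" "c \<le> y" "y < c + m"
  shows "x = y"
  using mod_eq_imp_le[of x m y] mod_eq_imp_le[of y m x] assms by (simp add: eq_commute)

definition star_route :: "nat \<Rightarrow> (nat \<Rightarrow> nat) \<Rightarrow> nat \<Rightarrow> nat list" where
  "star_route a f m = concat (map (\<lambda>i. [a, f i]) [0..<m])"

lemma length_star_route [simp]: "length (star_route a f m) = 2 * m"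
  by (induction m) (simp_all add: star_route_def)

lemma nth_star_route:
  "j < 2 * m \<Longrightarrow> star_route a f m ! j = (if even j then a else f (j div 2))"
proof (induction m arbitrary: j)
  case (Suc m)
  have split: "star_route a f (Suc m) = star_route a f m @ [a, f m]"
    by (simp add: star_route_def)
  show ?case
  proof (cases "j < 2 * m")
    case True
    then show ?thesis using Suc.IH by (simp add: split nth_append)
  next
    case False
    then have "j = 2 * m \<or> j = 2 * m + 1" using Suc.prems by auto
    then show ?thesis by (auto simp: split nth_append)
  qed
qed simp

lemma set_star_route: "0 < m \<Longrightarrow> set (star_route a f m) = insert a (f ` {..<m})"
  by (auto simp: star_route_def)

definition star_slot :: "nat \<Rightarrow> nat \<Rightarrow> nat" where
  "star_slot m t = (t mod (2 * m)) div 2"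

lemma star_slot_lt: "0 < m \<Longrightarrow> star_slot m t < m"
  unfolding star_slot_def by (simp add: less_mult_imp_div_less mult.commute)

lemma even_mod_double: "even (t mod (2 * m)) = even (t::nat)"
  using dvd_mod_iff[of 2 "2 * m" t] by simp

lemma rt_star_route:
  assumes "0 < m"
  shows "rt (star_route a f m) t = (if even t then a else f (star_slot m t))"
  using nth_star_route[of "t mod (2 * m)" m a f] assms
  unfolding rt_def star_slot_def by (simp add: even_mod_double)

lemma star_route_visits_leaf:
  assumes m: "0 < m" and i: "i < m"
  shows "\<exists>t. t0 \<le> t \<and> t < t0 + 2 * m \<and> even t \<and> rt (star_route a f m) (Suc t) = f i"
proof -
  define base where "base = 2 * m * (t0 div (2 * m))"
  have "t0 = base + t0 mod (2 * m)"
    unfolding base_def by (metis div_mult_mod_eq mult.commute)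
  moreover have "t0 mod (2 * m) < 2 * m" using m by simp
  ultimately have base_le: "base \<le> t0" and base_gt: "t0 < base + 2 * m" by linarith+
  have leaf_time: "rt (star_route a f m) (Suc (base + q * (2 * m) + 2 * i)) = f i" for q
  proof -
    have "Suc (base + q * (2 * m) + 2 * i) = (2 * i + 1) + (t0 div (2 * m) + q) * (2 * m)"
      by (simp add: base_def algebra_simps)
    then have "Suc (base + q * (2 * m) + 2 * i) mod (2 * m) = 2 * i + 1"
      using i by simp
    moreover have "even base" by (simp add: base_def)
    ultimately show ?thesis using rt_star_route[OF m] unfolding star_slot_def by simp
  qed
  show ?thesis
  proof (cases "t0 \<le> base + 2 * i")
    case True
    moreover have "even (base + 2 * i)" by (simp add: base_def)
    ultimately show ?thesis using leaf_time[of 0] i base_le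
      by (intro exI[of _ "base + 2 * i"]) auto
  next
    case False
    moreover have "even (base + 2 * m + 2 * i)" by (simp add: base_def)
    ultimately show ?thesis using leaf_time[of 1] i base_gt
      by (intro exI[of _ "base + 2 * m + 2 * i"]) (auto simp: add.assoc)
  qed
qed

context
  fixes a m :: nat and f :: "nat \<Rightarrow> nat"
  assumes m_pos: "0 < m" and f_inj: "inj_on f {..<m}" and f_ne_a: "\<forall>i<m. f i \<noteq> a"
begin

lemma star_same_site:
  assumes "rt (star_route a f m) i = rt (star_route a f m) j"
  shows "i mod (2 * m) = j mod (2 * m) \<or> (even i \<and> even j)"
proof -
  have slots: "star_slot m i < m" "star_slot m j < m" using star_slot_lt[OF m_pos] by auto
  have "i mod (2 * m) = j mod (2 * m)" if "odd i" "odd j"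
  proof -
    have "f (star_slot m i) = f (star_slot m j)"
      using assms that rt_star_route[OF m_pos] by simp
    then have "star_slot m i = star_slot m j" using f_inj slots by (auto dest: inj_onD)
    moreover have "odd (i mod (2 * m))" "odd (j mod (2 * m))"
      using that even_mod_double by auto
    ultimately show ?thesis unfolding star_slot_def by (metis odd_two_times_div_two_succ)
  qed
  moreover have "even i = even j"
    using assms rt_star_route[OF m_pos] f_ne_a slots by (auto split: if_splits)
  ultimately show ?thesis by blast
qed

lemma star_route_simple: "simple_route (star_route a f m)"
proof -
  let ?L = "star_route a f m"
  have "rt ?L i \<noteq> rt ?L (Suc i)" for i
  proof
    assume "rt ?L i = rt ?L (Suc i)"
    then have "i mod (2 * m) = Suc i mod (2 * m)"
      using star_same_site[of i "Suc i"] by simp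
    moreover have "Suc i < i + 2 * m" using m_pos by simp
    ultimately show False using mod_eq_in_window[of i "2 * m" "Suc i" i] by simp
  qed
  moreover have "rt ?L (Suc i) \<noteq> rt ?L (Suc j)"
    if ij: "i < j" "j < length ?L" "rt ?L i = rt ?L j" for i j
  proof
    assume "rt ?L (Suc i) = rt ?L (Suc j)"
    moreover have "i mod (2 * m) \<noteq> j mod (2 * m)"
      using ij mod_eq_in_window[of i "2 * m" j 0] by auto
    then have "even i" "even j" using ij(3) star_same_site[of i j] by auto
    ultimately have "Suc i mod (2 * m) = Suc j mod (2 * m)"
      using star_same_site[of "Suc i" "Suc j"] by simp
    then show False using mod_eq_in_window[of "Suc i" "2 * m" "Suc j" 1] ij by simp
  qed
  moreover have "?L \<noteq> []" using m_pos by (simp flip: length_greater_0_conv)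
  ultimately show ?thesis unfolding simple_route_def by blast
qed

lemma star_route_at_slot:
  assumes "j < m"
  shows "rt (star_route a f m) (2 * j) = a" "rt (star_route a f m) (Suc (2 * j)) = f j"
    and "rt (star_route a f m) (Suc (Suc (2 * j))) = a"
  using assms rt_star_route[OF m_pos] unfolding star_slot_def by auto

lemma star_route_edges: "route_edges (star_route a f m) = (\<lambda>j. {a, f j}) ` {..<m}"
proof
  let ?L = "star_route a f m"
  note at_slot = star_route_at_slot
  show "route_edges ?L \<subseteq> (\<lambda>j. {a, f j}) ` {..<m}"
  proof
    fix e assume "e \<in> route_edges ?L"
    then obtain i where i: "i < 2 * m" "e = {rt ?L i, rt ?L (Suc i)}"
      unfolding route_edges_def by auto
    show "e \<in> (\<lambda>j. {a, f j}) ` {..<m}"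
    proof (cases "even i")
      case True
      then show ?thesis using i at_slot[of "i div 2"] by auto
    next
      case False
      then have "e = {a, f (i div 2)}"
        using i rt_star_route[OF m_pos] unfolding star_slot_def by (auto simp: insert_commute)
      then show ?thesis using i by auto
    qed
  qed
  show "(\<lambda>j. {a, f j}) ` {..<m} \<subseteq> route_edges ?L"
  proof
    fix e assume "e \<in> (\<lambda>j. {a, f j}) ` {..<m}"
    then obtain j where "j < m" "e = {a, f j}" by auto
    then have "2 * j < length ?L" "e = {rt ?L (2 * j), rt ?L (Suc (2 * j))}"
      using at_slot by auto
    then show "e \<in> route_edges ?L" unfolding route_edges_def by blast
  qed
qed

lemma star_route_tree: "is_tree (set (star_route a f m)) (route_edges (star_route a f m))"
proof -
  let ?V = "insert a (f ` {..<m})" and ?E = "(\<lambda>j. {a, f j}) ` {..<m}"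
  have "inj_on (\<lambda>j. {a, f j}) {..<m}"
    using f_inj f_ne_a by (auto intro!: inj_onI dest: inj_onD simp: doubleton_eq_iff)
  then have card_E: "card ?E = m" by (simp add: card_image)
  have card_V: "card ?V = m + 1"
    using f_ne_a card_image[OF f_inj] by (subst card_insert_disjoint) auto
  let ?adj = "{(x, y). {x, y} \<in> ?E}"
  have to_hub: "(u, a) \<in> ?adj\<^sup>* \<and> (a, u) \<in> ?adj\<^sup>*" if u: "u \<in> ?V" for u
  proof (cases "u = a")
    case False
    then obtain j where "j < m" "u = f j" using u by auto
    then have "(u, a) \<in> ?adj" "(a, u) \<in> ?adj" by (auto simp: insert_commute)
    then show ?thesis by auto
  qed simp
  have connected: "\<forall>u\<in>?V. \<forall>v\<in>?V. (u, v) \<in> ?adj\<^sup>*"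
    using to_hub by (meson rtrancl_trans)
  have edges: "\<forall>e\<in>?E. \<exists>u v. e = {u, v} \<and> u \<noteq> v \<and> u \<in> ?V \<and> v \<in> ?V"
    using f_ne_a by auto
  show ?thesis
    unfolding is_tree_def set_star_route[OF m_pos] star_route_edges
    using card_E card_V connected edges by simp
qed

lemma star_route_unique_traversal:
  assumes "i < 2 * m" "j < 2 * m"
    and "rt (star_route a f m) i = rt (star_route a f m) j"
    and "rt (star_route a f m) (Suc i) = rt (star_route a f m) (Suc j)"
  shows "i = j"
proof -
  have "i mod (2 * m) = j mod (2 * m) \<or> Suc i mod (2 * m) = Suc j mod (2 * m)"
  proof (cases "even i \<and> even j")
    case True
    then show ?thesis using star_same_site[OF assms(4)] by simp
  next
    case False
    then show ?thesis using star_same_site[OF assms(3)] by blast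
  qed
  then show ?thesis
    using assms(1,2) mod_eq_in_window[of i "2 * m" j 0] mod_eq_in_window[of "Suc i" "2 * m" "Suc j" 1]
    by auto
qed

lemma star_route_irredundant: "irredundant_route (star_route a f m)"
proof -
  let ?L = "star_route a f m"
  have "\<exists>!i. i < length ?L \<and> rt ?L i = u \<and> rt ?L (Suc i) = v"
    if edge: "{u, v} \<in> route_edges ?L" for u v
  proof -
    obtain j where j: "j < m" "{u, v} = {a, f j}"
      using edge unfolding star_route_edges by blast
    then consider "u = a" "v = f j" | "u = f j" "v = a" by (auto simp: doubleton_eq_iff)
    then have "\<exists>i. i < length ?L \<and> rt ?L i = u \<and> rt ?L (Suc i) = v"
    proof cases
      case 1
      then show ?thesis using star_route_at_slot[OF j(1)] j(1) by (intro exI[of _ "2 * j"]) simp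
    next
      case 2
      then show ?thesis using star_route_at_slot[OF j(1)] j(1) by (intro exI[of _ "Suc (2 * j)"]) simp
    qed
    then show ?thesis using star_route_unique_traversal by auto
  qed
  then show ?thesis
    unfolding irredundant_route_def virtual_cycle_route_def
    using star_route_simple star_route_tree by blast
qed

end

lemma realizable_walk_map:
  assumes "\<forall>t<L. w t < k" and "0 < L \<Longrightarrow> pos R (w 0) 0 = s"
    and "\<forall>t. Suc t < L \<longrightarrow> pos R (w t) (Suc t) = pos R (w (Suc t)) (Suc t)"
  shows "realizable_walk k R s (map w [0..<L])"
  using assms unfolding realizable_walk_def by (auto simp del: upt_Suc)

lemma visited_map: "t < L \<Longrightarrow> pos R (w t) (Suc t) \<in> visited R s (map w [0..<L])"
  unfolding visited_def by (auto simp del: upt_Suc intro!: exI[of _ t])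

(* If the system is feasible, a lower bound on the length of every exploring walk from one
   injection site is a lower bound on M: an optimal strategy exists (the least bound is
   attained), and it must explore from that site. *)
lemma M_moves_lower_bound:
  assumes feas: "feasible n k R" and s: "s \<in> start_sites k R"
    and long: "\<And>cs. explores n k R s cs \<Longrightarrow> L \<le> length cs"
  shows "L \<le> M_moves n k R"
proof -
  define bounded where
    "bounded m \<longleftrightarrow> (\<exists>W. solves n k R W \<and> (\<forall>s\<in>start_sites k R. length (W s) \<le> m))" for m
  define W where "W s = (SOME cs. explores n k R s cs)" for s
  have "solves n k R W"
    unfolding solves_def W_def
    using feas unfolding feasible_def start_sites_def by (auto intro: someI_ex)
  moreover have "finite (start_sites k R)"
    unfolding start_sites_def by (simp add: setcompr_eq_image)
  ultimately have "bounded (Max ((\<lambda>s. length (W s)) ` start_sites k R))"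
    unfolding bounded_def by (intro exI[of _ W]) auto
  then have "bounded (M_moves n k R)"
    unfolding M_moves_def bounded_def[symmetric] by (rule LeastI)
  then obtain W' where "explores n k R s (W' s)" "length (W' s) \<le> M_moves n k R"
    using s unfolding bounded_def solves_def by blast
  then show ?thesis using long by fastforce
qed

(* The construction, for 4 <= n and 2 <= k <= n/2, with m = n - 2 leaf slots per period:
   carrier c < k - 1 is a star with hub c whose leaves are all other sites below n - 1;
   the last carrier k - 1 is a star with hub n - 1 and leaves {..<n - 2}. *)
definition hub :: "nat \<Rightarrow> nat \<Rightarrow> nat \<Rightarrow> nat" where
  "hub n k c = (if c < k - 1 then c else n - 1)"

(* Before rotation, carrier c < k - 1 visits leaf i + c + 1 (mod m) for slots i below its
   special slot 2k - 3 - 2c, the site n - 2 at the special slot, and i + c (mod m) after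
   it; the last carrier visits i + k - 1 (mod m) (its special slot m is never used). *)
definition special_slot :: "nat \<Rightarrow> nat \<Rightarrow> nat \<Rightarrow> nat" where
  "special_slot n k c = (if c < k - 1 then 2 * k - 3 - 2 * c else n - 2)"

definition leaf_shift :: "nat \<Rightarrow> nat \<Rightarrow> nat \<Rightarrow> nat" where
  "leaf_shift k c i = (if c < k - 1 \<and> i < 2 * k - 3 - 2 * c then c + 1 else c)"

definition base_leaf :: "nat \<Rightarrow> nat \<Rightarrow> nat \<Rightarrow> nat \<Rightarrow> nat" where
  "base_leaf n k c i =
     (if i = special_slot n k c then n - 2 else (i + leaf_shift k c i) mod (n - 2))"

(* The actual leaf schedule rotates the slots by 2k - 3, so that carriers c and c + 1 share
   their leaf exactly at slot n - 3 - 2c, i.e. the meeting of carriers 0 and 1 is in the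
   last slot of the period and each later meeting lies two slots earlier. *)
definition leaf :: "nat \<Rightarrow> nat \<Rightarrow> nat \<Rightarrow> nat \<Rightarrow> nat" where
  "leaf n k c i = base_leaf n k c ((i + (2 * k - 3)) mod (n - 2))"

definition route :: "nat \<Rightarrow> nat \<Rightarrow> nat \<Rightarrow> nat list" where
  "route n k c = star_route (hub n k c) (leaf n k c) (n - 2)"

(* handover n c is the earliest time an agent injected at site 0 can step from carrier c
   onto carrier c + 1: the meetings of consecutive carriers drift by 4 time units backwards
   per carrier, so each handover costs almost a full period 2m. *)
definition handover :: "nat \<Rightarrow> nat \<Rightarrow> nat" where
  "handover n c = 2 * (n - 2) - 1 + c * (2 * (n - 2) - 4)"

lemma handover_ge: "2 * (n - 2) - 1 \<le> handover n c"
  unfolding handover_def by simp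

lemma handover_mono: "c \<le> d \<Longrightarrow> handover n c \<le> handover n d"
  unfolding handover_def by (simp add: mult_le_mono1)

lemma handover_Suc: "handover n (Suc c) = handover n c + (2 * (n - 2) - 4)"
  unfolding handover_def by simp

function relay :: "nat \<Rightarrow> nat \<Rightarrow> nat \<Rightarrow> nat \<Rightarrow> nat" where
  "relay n k c t = (if c + 1 < k \<and> handover n c \<le> t then relay n k (Suc c) t else c)"
  by auto
termination by (relation "measure (\<lambda>(n, k, c, t). k - c)") auto

declare relay.simps [simp del]

lemma relay_lt: "c < k \<Longrightarrow> relay n k c t < k"
  by (induction n k c t rule: relay.induct) (subst relay.simps, simp)

lemma relay_early: "t < handover n c \<Longrightarrow> relay n k c t = c"
  by (subst relay.simps) simp

lemma relay_last: "0 < k \<Longrightarrow> relay n k (k - 1) t = k - 1"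
  by (subst relay.simps) simp

lemma relay_final:
  assumes "c < k" and "handover n (k - 2) \<le> t"
  shows "relay n k c t = k - 1"
proof -
  have "c \<le> k - 1" using assms(1) by simp
  then show ?thesis
  proof (induction c rule: inc_induct)
    case base
    show ?case using assms(1) by (intro relay_last) simp
  next
    case (step c)
    then have "c \<le> k - 2" by simp
    then have "handover n c \<le> t" using handover_mono[of c "k - 2" n] assms(2) by linarith
    moreover have "c + 1 < k" using step by linarith
    ultimately show ?case using step by (subst relay.simps) simp
  qed
qed

context
  fixes n k :: nat
  assumes n_ge: "4 \<le> n" and k_ge: "2 \<le> k" and k_le: "2 * k \<le> n"
begin

lemma slots_pos: "0 < n - 2"
  using n_ge by simp

lemma hub_inj: "c < k \<Longrightarrow> d < k \<Longrightarrow> hub n k c = hub n k d \<Longrightarrow> c = d"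
  unfolding hub_def using k_le by (auto split: if_splits)

lemma base_leaf_window:
  assumes "c < k" "i \<noteq> special_slot n k c" "i < n - 2"
  shows "c \<le> i + leaf_shift k c i" "i + leaf_shift k c i < c + (n - 2)"
    and "c < k - 1 \<Longrightarrow> c < i + leaf_shift k c i"
  using assms k_le unfolding leaf_shift_def special_slot_def by (auto split: if_splits)

lemma mod_slots_ne: "x mod (n - 2) \<noteq> n - 2"
  using slots_pos by (metis less_irrefl mod_less_divisor)

lemma base_leaf_le: "base_leaf n k c i \<le> n - 2"
  unfolding base_leaf_def using slots_pos by (simp add: less_imp_le)

lemma base_leaf_last_lt: "i < n - 2 \<Longrightarrow> base_leaf n k (k - 1) i < n - 2"
  unfolding base_leaf_def special_slot_def using slots_pos by simp

lemma base_leaf_ne_hub: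
  assumes c: "c < k" and i: "i < n - 2"
  shows "base_leaf n k c i \<noteq> hub n k c"
proof (cases "c < k - 1")
  case True
  have c_small: "c < n - 2" using True k_le by linarith
  show ?thesis
  proof (cases "i = special_slot n k c")
    case False
    let ?v = "i + leaf_shift k c i"
    have v: "c < ?v" "?v < c + (n - 2)" using base_leaf_window[OF c False i] True by auto
    have "?v mod (n - 2) \<noteq> c mod (n - 2)"
    proof
      assume "?v mod (n - 2) = c mod (n - 2)"
      then have "?v = c" using mod_eq_in_window[of ?v "n - 2" c c] v slots_pos by simp
      then show False using v by simp
    qed
    then show ?thesis using False True c_small unfolding base_leaf_def hub_def by simp
  qed (use True c_small in \<open>simp add: base_leaf_def hub_def\<close>)
next
  case False
  then show ?thesis using base_leaf_le[of c i] n_ge unfolding hub_def by simp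
qed

lemma base_leaf_inj:
  assumes c: "c < k" and i: "i < n - 2" and j: "j < n - 2"
    and eq: "base_leaf n k c i = base_leaf n k c j"
  shows "i = j"
proof (cases "i = special_slot n k c \<or> j = special_slot n k c")
  case True
  then show ?thesis using eq mod_slots_ne mod_slots_ne[symmetric] unfolding base_leaf_def by (auto split: if_splits)
next
  case False
  let ?vi = "i + leaf_shift k c i" and ?vj = "j + leaf_shift k c j"
  have "?vi mod (n - 2) = ?vj mod (n - 2)" using eq False unfolding base_leaf_def by simp
  then have "?vi = ?vj"
    using mod_eq_in_window base_leaf_window[OF c _ i] base_leaf_window[OF c _ j] False by blast
  then show ?thesis
    using False unfolding leaf_shift_def special_slot_def by (auto split: if_splits)
qed

lemma base_leaf_collision:
  assumes cd: "c < d" and d: "d < k" and i: "i < n - 2"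
    and eq: "base_leaf n k c i = base_leaf n k d i"
  shows "d = c + 1 \<and> i = 2 * k - 4 - 2 * c"
proof (cases "i = special_slot n k c \<or> i = special_slot n k d")
  case True
  then have "i = special_slot n k c \<and> i = special_slot n k d"
    using eq mod_slots_ne mod_slots_ne[symmetric] unfolding base_leaf_def by (auto split: if_splits)
  then show ?thesis using cd d i unfolding special_slot_def by (auto split: if_splits)
next
  case False
  have shift_lt: "leaf_shift k e i < n - 2" if "e < k" for e
    using that k_le k_ge unfolding leaf_shift_def by auto
  have "(i + leaf_shift k c i) mod (n - 2) = (i + leaf_shift k d i) mod (n - 2)"
    using eq False unfolding base_leaf_def by simp
  moreover have "i + leaf_shift k c i < i + (n - 2)" "i + leaf_shift k d i < i + (n - 2)"
    using shift_lt[of c] shift_lt[of d] cd d by auto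
  ultimately have "leaf_shift k c i = leaf_shift k d i"
    using mod_eq_in_window[of "i + leaf_shift k c i" "n - 2" "i + leaf_shift k d i" i] by simp
  then show ?thesis
    using cd d False unfolding leaf_shift_def special_slot_def by (auto split: if_splits)
qed

lemma base_leaf_meet:
  assumes "c + 1 < k"
  shows "base_leaf n k c (2 * k - 4 - 2 * c) = base_leaf n k (c + 1) (2 * k - 4 - 2 * c)"
  using assms k_le unfolding base_leaf_def special_slot_def leaf_shift_def by auto

lemma rotate_lt: "(i + (2 * k - 3)) mod (n - 2) < n - 2"
  using slots_pos by simp

lemma rotate_inj:
  assumes "i < n - 2" "j < n - 2" "(i + (2 * k - 3)) mod (n - 2) = (j + (2 * k - 3)) mod (n - 2)"
  shows "i = j"
  using mod_eq_in_window[of "i + (2 * k - 3)" "n - 2" "j + (2 * k - 3)" "2 * k - 3"] assms by simp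

lemma rotate_meet:
  assumes "c + 1 < k"
  shows "((n - 3 - 2 * c) + (2 * k - 3)) mod (n - 2) = 2 * k - 4 - 2 * c"
proof -
  have "(n - 3 - 2 * c) + (2 * k - 3) = (2 * k - 4 - 2 * c) + (n - 2)"
    and "2 * k - 4 - 2 * c < n - 2"
    using assms k_le k_ge by linarith+
  then show ?thesis by (metis mod_add_self2 mod_less)
qed

lemma leaf_le: "leaf n k c i \<le> n - 2"
  unfolding leaf_def by (rule base_leaf_le)

lemma leaf_last_lt: "leaf n k (k - 1) i < n - 2"
  unfolding leaf_def using base_leaf_last_lt rotate_lt by blast

lemma leaf_ne_hub: "c < k \<Longrightarrow> leaf n k c i \<noteq> hub n k c"
  unfolding leaf_def using base_leaf_ne_hub rotate_lt by blast

lemma leaf_inj: "c < k \<Longrightarrow> inj_on (leaf n k c) {..<n - 2}"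
  unfolding leaf_def by (auto intro!: inj_onI dest: base_leaf_inj[OF _ rotate_lt rotate_lt] rotate_inj)

lemma leaf_collision:
  assumes cd: "c < d" and d: "d < k" and i: "i < n - 2" and eq: "leaf n k c i = leaf n k d i"
  shows "d = c + 1 \<and> i = n - 3 - 2 * c"
proof -
  have d_next: "d = c + 1" and slot: "(i + (2 * k - 3)) mod (n - 2) = 2 * k - 4 - 2 * c"
    using base_leaf_collision[OF cd d rotate_lt] eq unfolding leaf_def by auto
  have "n - 3 - 2 * c < n - 2" using slots_pos by linarith
  then have "i = n - 3 - 2 * c"
    using rotate_inj[OF i] slot rotate_meet[of c] d_next d by simp
  then show ?thesis using d_next by simp
qed

lemma leaf_meet: "c + 1 < k \<Longrightarrow> leaf n k c (n - 3 - 2 * c) = leaf n k (c + 1) (n - 3 - 2 * c)"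
  unfolding leaf_def using rotate_meet base_leaf_meet by simp

lemma leaves_inner: "c < k - 1 \<Longrightarrow> leaf n k c ` {..<n - 2} = {..<n - 1} - {c}"
proof -
  assume c: "c < k - 1"
  have "leaf n k c ` {..<n - 2} \<subseteq> {..<n - 1} - {c}"
  proof
    fix x assume "x \<in> leaf n k c ` {..<n - 2}"
    then obtain i where "x = leaf n k c i" by blast
    then show "x \<in> {..<n - 1} - {c}"
      using leaf_le[of c i] leaf_ne_hub[of c i] c slots_pos unfolding hub_def by auto
  qed
  moreover have "card (leaf n k c ` {..<n - 2}) = card ({..<n - 1} - {c})"
    using card_image[OF leaf_inj[of c]] c k_le by simp
  ultimately show ?thesis by (simp add: card_subset_eq)
qed

lemma leaves_last: "leaf n k (k - 1) ` {..<n - 2} = {..<n - 2}"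
proof -
  have "leaf n k (k - 1) ` {..<n - 2} \<subseteq> {..<n - 2}" using leaf_last_lt by auto
  moreover have "card (leaf n k (k - 1) ` {..<n - 2}) = card {..<n - 2}"
    using card_image[OF leaf_inj[of "k - 1"]] k_ge by simp
  ultimately show ?thesis by (simp add: card_subset_eq)
qed

lemma route_pos:
  "pos (route n k) c t = (if even t then hub n k c else leaf n k c (star_slot (n - 2) t))"
  unfolding pos_def route_def using rt_star_route[OF slots_pos] by simp

lemma handover_mod:
  assumes "c + 1 < k"
  shows "handover n c mod (2 * (n - 2)) = 2 * (n - 2) - 1 - 4 * c"
proof -
  have "c * (2 * (n - 2) - 4) + 4 * c = c * (2 * (n - 2))"
    using n_ge by (simp add: diff_mult_distrib2 mult.commute)
  moreover have "4 * c \<le> 2 * (n - 2) - 1" using assms k_le by linarith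
  ultimately have "handover n c = (2 * (n - 2) - 1 - 4 * c) + c * (2 * (n - 2))"
    unfolding handover_def by linarith
  moreover have "2 * (n - 2) - 1 - 4 * c < 2 * (n - 2)" using n_ge by linarith
  ultimately show ?thesis by simp
qed

lemma handover_slot:
  assumes "c + 1 < k"
  shows "odd (handover n c)" "star_slot (n - 2) (handover n c) = n - 3 - 2 * c"
proof -
  have split: "2 * (n - 2) - 1 - 4 * c = 2 * (n - 3 - 2 * c) + 1" using assms k_le by linarith
  then have "odd (handover n c mod (2 * (n - 2)))" using handover_mod[OF assms] by simp
  then show "odd (handover n c)" using even_mod_double by blast
  show "star_slot (n - 2) (handover n c) = n - 3 - 2 * c"
    unfolding star_slot_def handover_mod[OF assms] split by simp
qed

lemma handover_meet:
  "c + 1 < k \<Longrightarrow> pos (route n k) c (handover n c) = pos (route n k) (c + 1) (handover n c)"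
  using route_pos handover_slot leaf_meet by simp

lemma carriers_meet:
  assumes a: "a < k" and b: "b < k" and ab: "a \<noteq> b"
    and eq: "pos (route n k) a t = pos (route n k) b t"
  shows "\<exists>j. j + 1 < k \<and> {a, b} = {j, j + 1} \<and> t mod (2 * (n - 2)) = handover n j mod (2 * (n - 2))"
proof -
  have "odd t"
    using eq hub_inj[OF a b] ab route_pos by auto
  let ?i = "star_slot (n - 2) t"
  have slot: "?i < n - 2" using star_slot_lt slots_pos by blast
  have leaves: "leaf n k a ?i = leaf n k b ?i"
    using eq \<open>odd t\<close> route_pos by simp
  obtain j where j: "j + 1 < k" "{a, b} = {j, j + 1}" "?i = n - 3 - 2 * j"
  proof (cases "a < b")
    case True
    then show ?thesis using that leaf_collision[OF True b slot leaves] b by auto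
  next
    case False
    then have "b < a" using ab by simp
    then show ?thesis
      using that leaf_collision[OF _ a slot leaves[symmetric]] a by (auto simp: insert_commute)
  qed
  have "t mod (2 * (n - 2)) = 2 * ?i + 1"
    using \<open>odd t\<close> even_mod_double unfolding star_slot_def by (metis odd_two_times_div_two_succ)
  also have "\<dots> = handover n j mod (2 * (n - 2))"
    using handover_mod[OF j(1)] j(3) j(1) k_le by linarith
  finally show ?thesis using j by blast
qed

lemma relay_step:
  assumes "c < k"
  shows "pos (route n k) (relay n k c t) (Suc t) = pos (route n k) (relay n k c (Suc t)) (Suc t)"
proof -
  have "c \<le> k - 1" using assms by simp
  then show ?thesis
  proof (induction c rule: inc_induct)
    case base
    show ?case using k_ge relay_last[of k n t] relay_last[of k n "Suc t"] by simp
  next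
    case (step c)
    consider "handover n c \<le> t" | "Suc t < handover n c" | "Suc t = handover n c" by linarith
    then show ?case
    proof cases
      case 1
      then show ?thesis using step by (simp add: relay.simps[of n k c])
    next
      case 2
      then show ?thesis by (simp add: relay_early)
    next
      case 3
      have "handover n c < handover n (Suc c)" if "Suc c + 1 < k"
        using that k_le handover_Suc[of n c] by simp
      then have "relay n k (Suc c) (handover n c) = Suc c"
        by (subst relay.simps) auto
      then have "relay n k c (Suc t) = Suc c"
        using step 3 by (simp add: relay.simps[of n k c])
      moreover have "relay n k c t = c" using 3 by (simp add: relay_early)
      ultimately show ?thesis using handover_meet[of c] step 3 by simp
    qed
  qed
qed

lemma hub_zero: "c < k \<Longrightarrow> hub n k c = 0 \<Longrightarrow> c = 0"
  unfolding hub_def using n_ge by (auto split: if_splits)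

(* Induction on t: a change of carrier
   happens at a meeting of consecutive carriers, and stepping up from d to d + 1 needs the
   meeting time congruent to handover n d, which cannot be earlier than handover n d because
   carrier d itself was reached after handover n (d - 1). *)
lemma handover_before_switch:
  assumes walk: "realizable_walk k (route n k) 0 cs"
  shows "t < length cs \<Longrightarrow> cs ! t = Suc d \<Longrightarrow> handover n d \<le> t"
proof (induction t arbitrary: d)
  case 0
  then have "pos (route n k) (cs ! 0) 0 = 0" "cs ! 0 < k"
    using walk unfolding realizable_walk_def by auto
  then have "cs ! 0 = 0" using hub_zero route_pos by simp
  then show ?case using 0 by simp
next
  case (Suc t)
  let ?a = "cs ! t"
  have IH: "\<And>d'. ?a = Suc d' \<Longrightarrow> handover n d' \<le> t" using Suc by simp
  have carriers: "?a < k" "Suc d < k"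
    and same_site: "pos (route n k) ?a (Suc t) = pos (route n k) (Suc d) (Suc t)"
    using walk Suc.prems unfolding realizable_walk_def by auto
  show ?case
  proof (cases "?a = Suc d")
    case True
    then show ?thesis using IH by fastforce
  next
    case False
    with carriers_meet[OF carriers False same_site] obtain j where j: "j + 1 < k"
      "{?a, Suc d} = {j, j + 1}" "Suc t mod (2 * (n - 2)) = handover n j mod (2 * (n - 2))"
      by blast
    then consider "?a = j" "d = j" | "?a = Suc j" "Suc d = j" by (auto simp: doubleton_eq_iff)
    then show ?thesis
    proof cases
      case 1
      have "handover n j < Suc t + 2 * (n - 2)"
      proof (cases j)
        case 0
        then show ?thesis unfolding handover_def by simp
      next
        case (Suc j')
        then show ?thesis using IH[of j'] 1 handover_Suc[of n j'] by simp
      qed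
      then show ?thesis using mod_eq_imp_le[OF j(3)] 1 by simp
    next
      case 2
      then show ?thesis using IH[of j] handover_mono[of d j n] by simp
    qed
  qed
qed

lemma handover_bound: "n * (k - 1) \<le> handover n (k - 2) + 1"
proof (cases "k = 2")
  case True
  then show ?thesis unfolding handover_def using n_ge by simp
next
  case False
  define a where "a = k - 2"
  have eq: "handover n (k - 2) + 1 = 2 * (n - 2) + a * (2 * (n - 2) - 4)"
    unfolding handover_def a_def using n_ge by simp
  have eq2: "n * (k - 1) = a * n + n" unfolding a_def using k_ge by (simp add: algebra_simps)
  show ?thesis
  proof (cases "8 \<le> n")
    case True
    have "a * n \<le> a * (2 * (n - 2) - 4)" by (rule mult_le_mono2) (use True in linarith)
    then show ?thesis using eq eq2 True by linarith
  next
    case False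
    then have "k = 3" "n = 6 \<or> n = 7" using k_le k_ge \<open>k \<noteq> 2\<close> by linarith+
    then show ?thesis unfolding handover_def by auto
  qed
qed

(* Site n - 1 is only the hub of the last carrier, so every exploration from site 0 must
   ride carrier k - 1 and hence lasts at least n (k - 1) moves. *)
lemma exploration_from_origin_long:
  assumes explores: "explores n k (route n k) 0 cs"
  shows "n * (k - 1) \<le> length cs"
proof -
  have walk: "realizable_walk k (route n k) 0 cs" using explores unfolding explores_def by simp
  have "n - 1 \<in> visited (route n k) 0 cs" "n - 1 \<noteq> 0"
    using explores n_ge unfolding explores_def by auto
  then obtain t where t: "t < length cs" "pos (route n k) (cs ! t) (Suc t) = n - 1"
    unfolding visited_def by auto
  have carrier: "cs ! t < k" using walk t unfolding realizable_walk_def by auto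
  have "even (Suc t)"
  proof (rule ccontr)
    assume "odd (Suc t)"
    then have "leaf n k (cs ! t) (star_slot (n - 2) (Suc t)) = n - 1" using t(2) route_pos by simp
    then show False using leaf_le[of "cs ! t" "star_slot (n - 2) (Suc t)"] n_ge by linarith
  qed
  then have "hub n k (cs ! t) = n - 1" using t(2) route_pos by simp
  then have "cs ! t = Suc (k - 2)" using carrier k_le k_ge unfolding hub_def by (auto split: if_splits)
  then have "handover n (k - 2) \<le> t" using handover_before_switch[OF walk t(1)] by blast
  then show ?thesis using handover_bound t(1) by linarith
qed

lemma route_visits_leaf:
  "i < n - 2 \<Longrightarrow>
   \<exists>t. t0 \<le> t \<and> t < t0 + 2 * (n - 2) \<and> even t \<and> pos (route n k) c (Suc t) = leaf n k c i"
  using star_route_visits_leaf[OF slots_pos] unfolding pos_def route_def by blast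

(* In particular every leaf is reached before the first handover time 2m - 1. *)
lemma route_visits_leaf_early:
  assumes "i < n - 2"
  shows "\<exists>t. t < 2 * (n - 2) - 1 \<and> pos (route n k) c (Suc t) = leaf n k c i"
proof -
  obtain t where t: "t < 2 * (n - 2)" "even t" "pos (route n k) c (Suc t) = leaf n k c i"
    using route_visits_leaf[OF assms, of 0 c] by auto
  have "t \<noteq> 2 * (n - 2) - 1" using t(2) slots_pos by presburger
  then show ?thesis using t by (intro exI[of _ t]) simp
qed

(* Exploration from the hub of an inner carrier c: ride c for one period (all sites below
   n - 1), then relay up to the last carrier, which brings the agent to n - 1. *)
lemma explores_from_inner_hub:
  assumes c: "c + 1 < k"
  shows "explores n k (route n k) (pos (route n k) c 0) (map (relay n k c) [0..<handover n (k - 2) + 1])"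
proof -
  let ?T = "handover n (k - 2)" and ?s = "pos (route n k) c 0"
  have "0 < handover n c" using handover_ge[of n c] n_ge by linarith
  then have start: "relay n k c 0 = c" by (rule relay_early)
  have c_inner: "c < k - 1" using c by linarith
  then have start_site: "?s = c" using route_pos[of c 0] unfolding hub_def by simp
  have walk: "realizable_walk k (route n k) ?s (map (relay n k c) [0..<?T + 1])"
  proof (rule realizable_walk_map)
    show "\<forall>t<?T + 1. relay n k c t < k" using relay_lt c by simp
    show "pos (route n k) (relay n k c 0) 0 = ?s" using start by simp
    show "\<forall>t. Suc t < ?T + 1 \<longrightarrow> pos (route n k) (relay n k c t) (Suc t)
                                 = pos (route n k) (relay n k c (Suc t)) (Suc t)"
      using relay_step c by simp
  qed
  have "x \<in> visited (route n k) ?s (map (relay n k c) [0..<?T + 1])" if x: "x < n" for x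
  proof -
    consider "x = n - 1" | "x = c" | "x \<in> {..<n - 1} - {c}" using x by fastforce
    then show ?thesis
    proof cases
      case 1
      have "relay n k c ?T = k - 1" using relay_final c by simp
      moreover have "odd ?T" using handover_slot(1)[of "k - 2"] k_ge by simp
      ultimately have "pos (route n k) (relay n k c ?T) (Suc ?T) = x"
        using 1 route_pos unfolding hub_def by simp
      then show ?thesis using visited_map[of ?T "?T + 1" "route n k" "relay n k c" ?s] by simp
    next
      case 2
      then show ?thesis using start_site unfolding visited_def by simp
    next
      case 3
      then have "x \<in> leaf n k c ` {..<n - 2}" using leaves_inner[OF c_inner] by simp
      then obtain i where "i < n - 2" "x = leaf n k c i" by blast
      then obtain t where t: "t < 2 * (n - 2) - 1" "pos (route n k) c (Suc t) = x"
        using route_visits_leaf_early by blast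
      moreover note handover_ge[of n c]
      moreover have "handover n c \<le> ?T" using handover_mono[of c "k - 2" n] c by simp
      ultimately have "t < handover n c" "handover n c \<le> ?T" by linarith+
      then have "t < ?T + 1" "relay n k c t = c" using relay_early[of t n c] by simp_all
      then show ?thesis using t(2) visited_map[of t "?T + 1" "route n k" "relay n k c" ?s] by simp
    qed
  qed
  then show ?thesis unfolding explores_def using walk by blast
qed

(* Exploration from site n - 1: ride the last carrier through its leaves {..<n - 2}, step
   down to carrier k - 2 at their meeting and ride it for one period to reach n - 2. *)
lemma explores_from_last_hub:
  defines "T \<equiv> handover n (k - 2)"
  defines "w \<equiv> \<lambda>t. if t < T then k - 1 else k - 2"
  shows "explores n k (route n k) (pos (route n k) (k - 1) 0) (map w [0..<T + 2 * (n - 2)])"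
proof -
  let ?s = "pos (route n k) (k - 1) 0" and ?L = "T + 2 * (n - 2)"
  have T_ge: "2 * (n - 2) - 1 \<le> T" unfolding T_def by (rule handover_ge)
  have start_site: "?s = n - 1" using route_pos[of "k - 1" 0] unfolding hub_def by simp
  have walk: "realizable_walk k (route n k) ?s (map w [0..<?L])"
  proof (rule realizable_walk_map)
    show "\<forall>t<?L. w t < k" using k_ge unfolding w_def by simp
    show "pos (route n k) (w 0) 0 = ?s" using T_ge n_ge unfolding w_def by simp
    have "pos (route n k) (w t) (Suc t) = pos (route n k) (w (Suc t)) (Suc t)" for t
    proof -
      consider "Suc t < T" | "Suc t = T" | "T < Suc t" by linarith
      then show ?thesis
      proof cases
        case 2
        have "k - 2 + 1 < k" "k - 2 + 1 = k - 1" using k_ge by simp_all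
        then show ?thesis using handover_meet[of "k - 2"] 2 unfolding w_def T_def by simp
      qed (simp_all add: w_def)
    qed
    then show "\<forall>t. Suc t < ?L \<longrightarrow> pos (route n k) (w t) (Suc t) = pos (route n k) (w (Suc t)) (Suc t)"
      by blast
  qed
  have "x \<in> visited (route n k) ?s (map w [0..<?L])" if x: "x < n" for x
  proof -
    consider "x = n - 1" | "x < n - 2" | "x = n - 2" using x by linarith
    then show ?thesis
    proof cases
      case 1
      then show ?thesis using start_site unfolding visited_def by simp
    next
      case 2
      then have "x \<in> leaf n k (k - 1) ` {..<n - 2}" using leaves_last by simp
      then obtain i where "i < n - 2" "x = leaf n k (k - 1) i" by blast
      then obtain t where t: "t < 2 * (n - 2) - 1" "pos (route n k) (k - 1) (Suc t) = x"
        using route_visits_leaf_early by blast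
      then have "t < T" "t < ?L" using T_ge by linarith+
      then show ?thesis using t(2) visited_map[of t ?L "route n k" w ?s] unfolding w_def by simp
    next
      case 3
      have "k - 2 < k - 1" "k - 2 < n - 2" using k_ge k_le by linarith+
      then have "x \<in> leaf n k (k - 2) ` {..<n - 2}" using leaves_inner[of "k - 2"] 3 by simp
      then obtain i where "i < n - 2" "x = leaf n k (k - 2) i" by blast
      then obtain t where t: "T \<le> t" "t < ?L" "pos (route n k) (k - 2) (Suc t) = x"
        using route_visits_leaf[of i T "k - 2"] by auto
      then show ?thesis using visited_map[of t ?L "route n k" w ?s] unfolding w_def by simp
    qed
  qed
  then show ?thesis unfolding explores_def using walk by blast
qed

lemma route_feasible: "feasible n k (route n k)"
  unfolding feasible_def
proof (intro allI impI)
  fix c assume "c < k"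
  then consider "c + 1 < k" | "c = k - 1" by linarith
  then show "\<exists>cs. explores n k (route n k) (pos (route n k) c 0) cs"
    using explores_from_inner_hub explores_from_last_hub by cases blast+
qed

lemma origin_is_start: "0 \<in> start_sites k (route n k)"
proof -
  have "pos (route n k) 0 0 = 0" using route_pos[of 0 0] k_ge unfolding hub_def by simp
  then show ?thesis unfolding start_sites_def using k_ge by force
qed

lemma route_pv_system: "pv_system n k (route n k)"
proof -
  have "set (route n k c) \<subseteq> {..<n}" if "c < k" for c
  proof -
    have "leaf n k c i < n" for i using leaf_le[of c i] n_ge by linarith
    then show ?thesis
      using that k_le unfolding route_def set_star_route[OF slots_pos] hub_def by auto
  qed
  moreover have "route n k c \<noteq> []" for c
    using slots_pos unfolding route_def by (simp flip: length_greater_0_conv)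
  ultimately show ?thesis unfolding pv_system_def using k_ge k_le by simp
qed

lemma route_homogeneous: "homogeneous k (route n k)"
  unfolding homogeneous_def route_def by simp

lemma route_irredundant: "irredundant_pv k (route n k)"
  unfolding irredundant_pv_def route_def
  using star_route_irredundant[OF slots_pos leaf_inj] leaf_ne_hub by blast

end

theorem mainTheorem7:
  fixes n k :: nat
  assumes "4 \<le> n" and "2 \<le> k" and "2 * k \<le> n"
  shows "\<exists>R. pv_system n k R \<and> homogeneous k R \<and> irredundant_pv k R \<and>
             feasible n k R \<and> n * (k - 1) \<le> M_moves n k R"
proof (intro exI[of _ "route n k"] conjI)
  show "pv_system n k (route n k)" using route_pv_system[OF assms] .
  show "homogeneous k (route n k)" using route_homogeneous[OF assms] .
  show "irredundant_pv k (route n k)" using route_irredundant[OF assms] .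
  show "feasible n k (route n k)" using route_feasible[OF assms] .
  show "n * (k - 1) \<le> M_moves n k (route n k)"
    using M_moves_lower_bound[OF route_feasible[OF assms] origin_is_start[OF assms]]
      exploration_from_origin_long[OF assms] .
qed

end
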